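(* For every $m \ge 1$, the commutator subgroup $TW_{m+2}'$ of the twin group $TW_{m+2}$ has rank (minimal cardinality of a generating set) equal to $2m-1$.
   Context: For $n \ge 2$, the twin group $TW_n$ is the group with generators $\tau_1,\dots,\tau_{n-1}$ and defining relations $\tau_i^2=1$ for all $i$, and $\tau_i\tau_j=\tau_j\tau_i$ whenever $|i-j|>1$. $G'$ denotes the commutator subgroup of a group $G$. *)

theory Defs
  imports "HOL-Algebra.Algebra"
begin

text \<open>Since every generator is an involution,
  the group presented by generators tau_1..tau_(n-1) with relations tau_i^2 = 1 and
  tau_i tau_j = tau_j tau_i (|i-j|>1) coincides with the monoid presented by the same
  relations.\<close>

definition tw_words :: "nat \<Rightarrow> nat list set" where
  "tw_words n = {w. set w \<subseteq> {1..<n}}"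

inductive_set tw_step :: "nat \<Rightarrow> (nat list \<times> nat list) set" for n :: nat where
  invol: "\<lbrakk>xs \<in> tw_words n; ys \<in> tw_words n; i \<in> {1..<n}\<rbrakk>
          \<Longrightarrow> (xs @ [i, i] @ ys, xs @ ys) \<in> tw_step n"
| comm: "\<lbrakk>xs \<in> tw_words n; ys \<in> tw_words n; i \<in> {1..<n}; j \<in> {1..<n};
          i + 1 < j \<or> j + 1 < i\<rbrakk>
          \<Longrightarrow> (xs @ [i, j] @ ys, xs @ [j, i] @ ys) \<in> tw_step n"

definition tw_eq :: "nat \<Rightarrow> (nat list \<times> nat list) set" where
  "tw_eq n = ((tw_step n \<union> (tw_step n)\<inverse>)\<^sup>*) \<inter> (tw_words n \<times> tw_words n)"

definition twin_group :: "nat \<Rightarrow> nat list set monoid" where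
  "twin_group n = \<lparr> carrier = tw_words n // tw_eq n,
     monoid.mult = (\<lambda>A B. \<Union>a\<in>A. \<Union>b\<in>B. tw_eq n `` {a @ b}),
     monoid.one = tw_eq n `` {[]} \<rparr>"

text \<open>Rank of a subgroup H of G: H is generated by a finite set of cardinality r,
  and every finite generating set of H has at least r elements (infinite generating
  sets trivially have larger cardinality).\<close>

definition has_rank :: "('a, 'b) monoid_scheme \<Rightarrow> 'a set \<Rightarrow> nat \<Rightarrow> bool" where
  "has_rank G H r \<longleftrightarrow>
     (\<exists>S. S \<subseteq> H \<and> finite S \<and> card S = r \<and> generate G S = H) \<and>
     (\<forall>S. S \<subseteq> H \<and> finite S \<and> generate G S = H \<longrightarrow> r \<le> card S)"

end

theory Submission
  imports Defs
begin

(*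
  Upper bound: the 2m - 1 commutators alpha_i = [tau_i, tau_(i+1)] (1 <= i <= m) and
  beta_i = tau_(i-1) alpha_i tau_(i-1) (2 <= i <= m) generate a subgroup N that is normal, because
  conjugating any of them by a generator tau_j gives a product of them and their inverses, and that
  contains every commutator [tau_i, tau_j]. Hence TW/N is abelian, so N contains, and then equals,
  the commutator subgroup.

  Lower bound: for a weight c(s, l) depending on a parity vector s and a letter l, sum c over the
  letters of a word modulo 2, evaluating at the parities of the letters read before. Two local
  conditions on c make this sum invariant under the defining relations, and on words in which
  every letter occurs evenly often (these represent all of TW') it is additive. Weights dual to
  the alpha_i and beta_i thus give a homomorphism from TW' onto (Z/2)^(2m-1), which cannot be
  generated by fewer than 2m - 1 elements.
*)

section \<open>Generators, normality and the derived subgroup\<close>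

lemma (in normal) rcos_mult_commute:
  assumes "s \<in> carrier G" "t \<in> carrier G" "s \<otimes> t \<otimes> inv s \<otimes> inv t \<in> H"
  shows "(H #> s) <#> (H #> t) = (H #> t) <#> (H #> s)"
proof -
  have "(s \<otimes> t) \<otimes> inv (t \<otimes> s) = s \<otimes> t \<otimes> inv s \<otimes> inv t"
    using assms by (simp add: inv_mult_group m_assoc)
  then have "s \<otimes> t \<in> H #> (t \<otimes> s)"
    using assms by (intro rcos_module_rev) auto
  then have "H #> (s \<otimes> t) = H #> (t \<otimes> s)"
    using assms by (simp add: repr_independence subgroup_axioms)
  then show ?thesis
    using assms by (simp add: rcos_sum)
qed

context group
begin

lemma commutator_in_derived:
  "x \<in> carrier G \<Longrightarrow> y \<in> carrier G \<Longrightarrow> x \<otimes> y \<otimes> inv x \<otimes> inv y \<in> derived G (carrier G)"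
  unfolding derived_def by (intro generate.incl) blast

lemma commutator_eq_one_if_commute:
  "x \<in> carrier G \<Longrightarrow> y \<in> carrier G \<Longrightarrow> x \<otimes> y = y \<otimes> x \<Longrightarrow> x \<otimes> y \<otimes> inv x \<otimes> inv y = \<one>"
  by (simp add: m_assoc)

lemma conjugation_group_hom:
  assumes "g \<in> carrier G"
  shows "group_hom G G (\<lambda>x. g \<otimes> x \<otimes> inv g)"
proof -
  have "g \<otimes> (x \<otimes> y) \<otimes> inv g = g \<otimes> x \<otimes> inv g \<otimes> (g \<otimes> y \<otimes> inv g)"
    if "x \<in> carrier G" "y \<in> carrier G" for x y
    using that assms by (simp add: m_assoc[symmetric]) (simp add: m_assoc)
  then show ?thesis
    using assms by (auto simp: group_hom_def group_hom_axioms_def hom_def is_group)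
qed

lemma conj_generate_closed:
  assumes "g \<in> carrier G" "S \<subseteq> carrier G" "\<And>s. s \<in> S \<Longrightarrow> g \<otimes> s \<otimes> inv g \<in> generate G S"
    and "h \<in> generate G S"
  shows "g \<otimes> h \<otimes> inv g \<in> generate G S"
proof -
  interpret conj: group_hom G G "\<lambda>x. g \<otimes> x \<otimes> inv g"
    using conjugation_group_hom assms(1) .
  have "(\<lambda>x. g \<otimes> x \<otimes> inv g) ` generate G S = generate G ((\<lambda>x. g \<otimes> x \<otimes> inv g) ` S)"
    using conj.generate_img[OF assms(2)] by simp
  also have "\<dots> \<subseteq> generate G S"
    using assms(2,3) by (intro generate_subgroup_incl generate_is_subgroup) auto
  finally show ?thesis using assms(4) by blast
qed

lemma normal_generate_if_conj_closed:
  assumes gen: "generate G T = carrier G" and T: "T \<subseteq> carrier G" "\<And>t. t \<in> T \<Longrightarrow> inv t \<in> T"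
    and S: "S \<subseteq> carrier G"
    and conj: "\<And>t s. t \<in> T \<Longrightarrow> s \<in> S \<Longrightarrow> t \<otimes> s \<otimes> inv t \<in> generate G S"
  shows "generate G S \<lhd> G"
proof (rule normal_invI[OF generate_is_subgroup[OF S]])
  have "\<forall>s\<in>S. g \<otimes> s \<otimes> inv g \<in> generate G S" if "g \<in> generate G T" for g
    using that
  proof (induction rule: generate.induct)
    case one
    then show ?case using S by (auto simp: subset_iff intro: generate.incl)
  next
    case (incl t)
    then show ?case using conj by blast
  next
    case (inv t)
    then show ?case using conj T by blast
  next
    case (eng g1 g2)
    have g: "g1 \<in> carrier G" "g2 \<in> carrier G"
      using eng.hyps generate_in_carrier[OF T(1)] by auto
    have "(g1 \<otimes> g2) \<otimes> s \<otimes> inv (g1 \<otimes> g2) = g1 \<otimes> (g2 \<otimes> s \<otimes> inv g2) \<otimes> inv g1"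
      if "s \<in> S" for s
      using that g S by (auto simp: m_assoc inv_mult_group)
    then show ?case
      using eng.IH conj_generate_closed[OF g(1) S] by auto
  qed
  then show "g \<otimes> h \<otimes> inv g \<in> generate G S" if "g \<in> carrier G" "h \<in> generate G S" for g h
    using that gen conj_generate_closed[OF _ S] by blast
qed

lemma subgroup_commuting_elements:
  assumes "A \<subseteq> carrier G"
  shows "subgroup {y \<in> carrier G. \<forall>x\<in>A. x \<otimes> y = y \<otimes> x} G"
proof (rule subgroupI)
  fix y assume y: "y \<in> {y \<in> carrier G. \<forall>x\<in>A. x \<otimes> y = y \<otimes> x}"
  have "x \<otimes> inv y = inv y \<otimes> x" if x: "x \<in> A" for x
  proof -
    have xc: "x \<in> carrier G" using x assms by blast
    have "x \<otimes> inv y = inv y \<otimes> (y \<otimes> x) \<otimes> inv y"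
      using xc y by (simp add: m_assoc[symmetric])
    also have "\<dots> = inv y \<otimes> (x \<otimes> y) \<otimes> inv y"
      using x y by simp
    also have "\<dots> = inv y \<otimes> x"
      using xc y by (simp add: m_assoc)
    finally show ?thesis .
  qed
  then show "inv y \<in> {y \<in> carrier G. \<forall>x\<in>A. x \<otimes> y = y \<otimes> x}"
    using y by auto
next
  fix y z
  assume "y \<in> {y \<in> carrier G. \<forall>x\<in>A. x \<otimes> y = y \<otimes> x}" "z \<in> {y \<in> carrier G. \<forall>x\<in>A. x \<otimes> y = y \<otimes> x}"
  then show "y \<otimes> z \<in> {y \<in> carrier G. \<forall>x\<in>A. x \<otimes> y = y \<otimes> x}"
    using assms by (auto simp: m_assoc[symmetric]) (metis m_assoc subsetD)
qed (use assms in \<open>auto simp: subset_iff intro!: exI[of _ \<one>]\<close>)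

lemma generate_pairwise_commuting:
  assumes T: "T \<subseteq> carrier G" and comm: "\<And>s t. s \<in> T \<Longrightarrow> t \<in> T \<Longrightarrow> s \<otimes> t = t \<otimes> s"
    and "x \<in> generate G T" "y \<in> generate G T"
  shows "x \<otimes> y = y \<otimes> x"
proof -
  have "generate G T \<subseteq> {y \<in> carrier G. \<forall>x\<in>T. x \<otimes> y = y \<otimes> x}"
    using T comm by (intro generate_subgroup_incl[OF _ subgroup_commuting_elements[OF T]]) auto
  then have "generate G T \<subseteq> {y \<in> carrier G. \<forall>x\<in>generate G T. x \<otimes> y = y \<otimes> x}"
    using T generate_in_carrier[OF T]
    by (intro generate_subgroup_incl[OF _ subgroup_commuting_elements]) auto
  then show ?thesis using assms(3,4) by blast
qed

lemma derived_subset_if_generator_commutators: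
  assumes gen: "generate G T = carrier G" and T: "T \<subseteq> carrier G" and N: "N \<lhd> G"
    and comm: "\<And>s t. s \<in> T \<Longrightarrow> t \<in> T \<Longrightarrow> s \<otimes> t \<otimes> inv s \<otimes> inv t \<in> N"
  shows "derived G (carrier G) \<subseteq> N"
proof (rule derived_minimal[OF N])
  interpret N: normal N G by (rule N)
  interpret Q: group "G Mod N" by (rule N.factorgroup_is_group)
  interpret quot: group_hom G "G Mod N" "\<lambda>x. N #> x"
    unfolding group_hom_def group_hom_axioms_def
    using is_group Q.is_group N.r_coset_hom_Mod by blast
  have T_img: "(\<lambda>x. N #> x) ` T \<subseteq> carrier (G Mod N)"
    using T by auto
  have carrier_Q: "generate (G Mod N) ((\<lambda>x. N #> x) ` T) = carrier (G Mod N)"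
    using quot.generate_img[OF T] gen by (simp add: carrier_FactGroup)
  have "a \<otimes>\<^bsub>G Mod N\<^esub> b = b \<otimes>\<^bsub>G Mod N\<^esub> a"
    if "a \<in> (\<lambda>x. N #> x) ` T" "b \<in> (\<lambda>x. N #> x) ` T" for a b
    using that T comm N.rcos_mult_commute by (auto simp: subset_iff)
  then show "comm_group (G Mod N)"
    using Q.generate_pairwise_commuting[OF T_img] carrier_Q by (intro Q.group_comm_groupI) blast
qed

end

section \<open>Homomorphisms to sets under symmetric difference\<close>

definition symdiff :: "'a set \<Rightarrow> 'a set \<Rightarrow> 'a set" where
  "symdiff A B = (A - B) \<union> (B - A)"

lemma symdiff_empty [simp]: "symdiff {} A = A" "symdiff A {} = A"
  by (auto simp: symdiff_def)

lemma symdiff_self [simp]: "symdiff A A = {}"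
  by (auto simp: symdiff_def)

lemma symdiff_assoc: "symdiff (symdiff A B) C = symdiff A (symdiff B C)"
  by (auto simp: symdiff_def)

lemma symdiff_left_commute: "symdiff A (symdiff B C) = symdiff B (symdiff A C)"
  by (auto simp: symdiff_def)

lemma symdiff_cancel_left [simp]: "symdiff A (symdiff A B) = B"
  by (auto simp: symdiff_def)

inductive_set symdiff_span :: "'a set set \<Rightarrow> 'a set set" for \<A> where
  empty: "{} \<in> symdiff_span \<A>"
| symdiff: "A \<in> \<A> \<Longrightarrow> B \<in> symdiff_span \<A> \<Longrightarrow> symdiff A B \<in> symdiff_span \<A>"

lemma symdiff_span_symdiff_closed:
  "A \<in> symdiff_span \<A> \<Longrightarrow> B \<in> symdiff_span \<A> \<Longrightarrow> symdiff A B \<in> symdiff_span \<A>"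
  by (induction rule: symdiff_span.induct) (auto simp: symdiff_assoc intro: symdiff_span.intros)

lemma symdiff_span_insert: "symdiff_span (insert A \<A>) \<subseteq> symdiff_span \<A> \<union> symdiff A ` symdiff_span \<A>"
proof
  fix B assume "B \<in> symdiff_span (insert A \<A>)"
  then show "B \<in> symdiff_span \<A> \<union> symdiff A ` symdiff_span \<A>"
  proof (induction rule: symdiff_span.induct)
    case (symdiff A' B)
    show ?case
    proof (cases "A' = A")
      case False
      then have "A' \<in> \<A>" using symdiff.hyps by auto
      with symdiff.IH show ?thesis
        by (auto simp: symdiff_left_commute[of A' A] intro: symdiff_span.intros)
    qed (use symdiff.IH in auto)
  qed (auto intro: symdiff_span.intros)
qed

lemma finite_card_symdiff_span:
  fixes \<A> :: "'a set set"
  shows "finite \<A> \<Longrightarrow> finite (symdiff_span \<A>) \<and> card (symdiff_span \<A>) \<le> 2 ^ card \<A>"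
proof (induction rule: finite_induct)
  case empty
  have "symdiff_span ({} :: 'a set set) = {{}}"
  proof
    show "symdiff_span ({} :: 'a set set) \<subseteq> {{}}"
      by (auto elim: symdiff_span.cases)
  qed (auto intro: symdiff_span.intros)
  then show ?case by simp
next
  case (insert A \<A>)
  have fin: "finite (symdiff_span \<A> \<union> symdiff A ` symdiff_span \<A>)"
    using insert by auto
  have "card (symdiff_span (insert A \<A>)) \<le> card (symdiff_span \<A> \<union> symdiff A ` symdiff_span \<A>)"
    by (rule card_mono[OF fin symdiff_span_insert])
  also have "\<dots> \<le> card (symdiff_span \<A>) + card (symdiff A ` symdiff_span \<A>)"
    by (rule card_Un_le)
  also have "\<dots> \<le> 2 * card (symdiff_span \<A>)"
    using card_image_le insert by auto
  also have "\<dots> \<le> 2 ^ card (insert A \<A>)"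
    using insert by simp
  finally show ?case
    using finite_subset[OF symdiff_span_insert fin] by simp
qed

context group
begin

lemma symdiff_hom_one:
  assumes "subgroup H G" "\<And>x y. x \<in> H \<Longrightarrow> y \<in> H \<Longrightarrow> f (x \<otimes> y) = symdiff (f x) (f y)"
  shows "f \<one> = {}"
  using assms(2)[of \<one> \<one>] subgroup.one_closed[OF assms(1)] by simp

lemma symdiff_hom_image_subset_span:
  assumes H: "subgroup H G" and S: "generate G S = H"
    and hom: "\<And>x y. x \<in> H \<Longrightarrow> y \<in> H \<Longrightarrow> f (x \<otimes> y) = symdiff (f x) (f y)"
  shows "f ` H \<subseteq> symdiff_span (f ` S)"
proof
  have f_one: "f \<one> = {}"
    using symdiff_hom_one[OF H hom] .
  have f_inv: "f (inv x) = f x" if "x \<in> H" for x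
  proof -
    have "symdiff (f x) (f (inv x)) = {}"
      using hom[of x "inv x"] that H f_one by (simp add: subgroup.m_inv_closed subgroup.mem_carrier)
    then show ?thesis by (auto simp: symdiff_def)
  qed
  fix y assume "y \<in> f ` H"
  then obtain x where "x \<in> generate G S" "y = f x"
    using S by blast
  then show "y \<in> symdiff_span (f ` S)"
  proof (induction x arbitrary: y rule: generate.induct)
    case one
    then show ?case by (simp add: f_one symdiff_span.empty)
  next
    case (incl h)
    then show ?case using symdiff_span.symdiff[of "f h" "f ` S" "{}"] by (simp add: symdiff_span.empty)
  next
    case (inv h)
    then show ?case using symdiff_span.symdiff[of "f h" "f ` S" "{}"] S generate.incl[of h S G]
      by (simp add: symdiff_span.empty f_inv)
  next
    case (eng h1 h2)
    then show ?case using S by (simp add: hom symdiff_span_symdiff_closed)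
  qed
qed

lemma Pow_subset_symdiff_hom_image:
  assumes H: "subgroup H G" and J: "finite J"
    and hom: "\<And>x y. x \<in> H \<Longrightarrow> y \<in> H \<Longrightarrow> f (x \<otimes> y) = symdiff (f x) (f y)"
    and singletons: "\<And>j. j \<in> J \<Longrightarrow> \<exists>g\<in>H. f g = {j}"
  shows "Pow J \<subseteq> f ` H"
proof
  fix K assume "K \<in> Pow J"
  then have "finite K" "K \<subseteq> J" using J finite_subset by auto
  then show "K \<in> f ` H"
  proof (induction rule: finite_induct)
    case empty
    then show ?case using symdiff_hom_one[OF H hom] subgroup.one_closed[OF H] by force
  next
    case (insert j K)
    obtain x where x: "x \<in> H" "K = f x" using insert by auto
    obtain g where g: "g \<in> H" "f g = {j}" using singletons insert by blast
    have "f (g \<otimes> x) = insert j K"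
      using hom[OF g(1) x(1)] g x insert(2) by (auto simp: symdiff_def)
    then show ?case using subgroup.m_closed[OF H g(1) x(1)] by force
  qed
qed

lemma card_le_card_generators_if_symdiff_hom:
  assumes H: "subgroup H G" and S: "generate G S = H" "finite S" and J: "finite J"
    and hom: "\<And>x y. x \<in> H \<Longrightarrow> y \<in> H \<Longrightarrow> f (x \<otimes> y) = symdiff (f x) (f y)"
    and singletons: "\<And>j. j \<in> J \<Longrightarrow> \<exists>g\<in>H. f g = {j}"
  shows "card J \<le> card S"
proof -
  have "Pow J \<subseteq> symdiff_span (f ` S)"
    using Pow_subset_symdiff_hom_image[OF H J hom singletons] symdiff_hom_image_subset_span[OF H S(1) hom]
    by blast
  then have "card (Pow J) \<le> card (symdiff_span (f ` S))"
    using finite_card_symdiff_span[of "f ` S"] S(2) by (auto intro: card_mono)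
  also have "\<dots> \<le> 2 ^ card (f ` S)"
    using finite_card_symdiff_span[of "f ` S"] S(2) by auto
  also have "\<dots> \<le> 2 ^ card S"
    using card_image_le[OF S(2)] by simp
  finally show ?thesis
    using J by (simp add: card_Pow)
qed

end

section \<open>The twin group as a quotient of words\<close>

lemma tw_words_append [simp]: "xs @ ys \<in> tw_words n \<longleftrightarrow> xs \<in> tw_words n \<and> ys \<in> tw_words n"
  by (auto simp: tw_words_def)

lemma tw_words_Cons [simp]: "x # xs \<in> tw_words n \<longleftrightarrow> x \<in> {1..<n} \<and> xs \<in> tw_words n"
  by (auto simp: tw_words_def)

lemma tw_words_Nil [simp]: "[] \<in> tw_words n"
  by (auto simp: tw_words_def)

lemma tw_words_rev [simp]: "rev xs \<in> tw_words n \<longleftrightarrow> xs \<in> tw_words n"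
  by (auto simp: tw_words_def)

abbreviation tw_conv :: "nat \<Rightarrow> (nat list \<times> nat list) set" where
  "tw_conv n \<equiv> (tw_step n \<union> (tw_step n)\<inverse>)\<^sup>*"

lemma tw_step_words: "(u, v) \<in> tw_step n \<Longrightarrow> u \<in> tw_words n \<and> v \<in> tw_words n"
  by (induction rule: tw_step.induct) auto

lemma tw_conv_words: "(u, v) \<in> tw_conv n \<Longrightarrow> u \<in> tw_words n \<Longrightarrow> v \<in> tw_words n"
  by (induction rule: rtrancl_induct) (auto dest: tw_step_words)

lemma tw_step_context:
  "(u, v) \<in> tw_step n \<Longrightarrow> z \<in> tw_words n \<Longrightarrow> z' \<in> tw_words n \<Longrightarrow> (z @ u @ z', z @ v @ z') \<in> tw_step n"
proof (induction rule: tw_step.induct)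
  case (invol xs ys i)
  then show ?case using tw_step.invol[of "z @ xs" n "ys @ z'" i] by simp
next
  case (comm xs ys i j)
  then show ?case using tw_step.comm[of "z @ xs" n "ys @ z'" i j] by simp
qed

lemma tw_conv_context:
  "(u, v) \<in> tw_conv n \<Longrightarrow> z \<in> tw_words n \<Longrightarrow> z' \<in> tw_words n \<Longrightarrow> (z @ u @ z', z @ v @ z') \<in> tw_conv n"
proof (induction rule: rtrancl_induct)
  case (step y w)
  then have "(z @ y @ z', z @ w @ z') \<in> tw_step n \<union> (tw_step n)\<inverse>"
    using tw_step_context by blast
  with step show ?case by (meson rtrancl.rtrancl_into_rtrancl)
qed simp

lemma tw_conv_Cons: "(u, v) \<in> tw_conv n \<Longrightarrow> d \<in> {1..<n} \<Longrightarrow> (d # u, d # v) \<in> tw_conv n"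
  using tw_conv_context[of u v n "[d]" "[]"] by simp

lemma tw_conv_sym: "(u, v) \<in> tw_conv n \<Longrightarrow> (v, u) \<in> tw_conv n"
  by (metis converse_Un converse_converse converse_iff rtrancl_converse sup_commute)

lemma tw_eq_iff: "(u, v) \<in> tw_eq n \<longleftrightarrow> (u, v) \<in> tw_conv n \<and> u \<in> tw_words n \<and> v \<in> tw_words n"
  by (auto simp: tw_eq_def)

lemma equiv_tw_eq: "equiv (tw_words n) (tw_eq n)"
  by (rule equivI) (auto simp: refl_on_def sym_def trans_def tw_eq_iff intro: tw_conv_sym rtrancl_trans)

lemma tw_eq_append: "(u, u') \<in> tw_eq n \<Longrightarrow> (v, v') \<in> tw_eq n \<Longrightarrow> (u @ v, u' @ v') \<in> tw_eq n"
  using tw_conv_context[of u u' n "[]" v] tw_conv_context[of v v' n u' "[]"]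
  by (auto simp: tw_eq_iff intro: rtrancl_trans)

definition tw_class :: "nat \<Rightarrow> nat list \<Rightarrow> nat list set" where
  "tw_class n w = tw_eq n `` {w}"

lemma tw_class_eq_iff:
  "u \<in> tw_words n \<Longrightarrow> v \<in> tw_words n \<Longrightarrow> tw_class n u = tw_class n v \<longleftrightarrow> (u, v) \<in> tw_eq n"
  unfolding tw_class_def using eq_equiv_class_iff[OF equiv_tw_eq] by blast

lemma tw_class_eqI: "(u, v) \<in> tw_conv n \<Longrightarrow> u \<in> tw_words n \<Longrightarrow> tw_class n u = tw_class n v"
  by (simp add: tw_class_eq_iff tw_eq_iff tw_conv_words)

lemma tw_class_self: "u \<in> tw_words n \<Longrightarrow> u \<in> tw_class n u"
  unfolding tw_class_def using equiv_class_self[OF equiv_tw_eq] by blast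

lemma mem_tw_class_iff: "v \<in> tw_class n u \<longleftrightarrow> (u, v) \<in> tw_eq n"
  unfolding tw_class_def by auto

lemma carrier_twin_group: "carrier (twin_group n) = tw_class n ` tw_words n"
  unfolding twin_group_def quotient_def tw_class_def by auto

lemma one_twin_group: "\<one>\<^bsub>twin_group n\<^esub> = tw_class n []"
  unfolding twin_group_def tw_class_def by simp

lemma tw_class_mult:
  assumes "u \<in> tw_words n" "v \<in> tw_words n"
  shows "tw_class n u \<otimes>\<^bsub>twin_group n\<^esub> tw_class n v = tw_class n (u @ v)"
proof -
  have "tw_class n (a @ b) = tw_class n (u @ v)" if "a \<in> tw_class n u" "b \<in> tw_class n v" for a b
  proof -
    have "(u @ v, a @ b) \<in> tw_eq n"
      using that tw_eq_append by (simp add: mem_tw_class_iff)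
    then show ?thesis
      unfolding tw_eq_iff by (metis tw_class_eq_iff tw_conv_sym tw_eq_iff)
  qed
  moreover have "u \<in> tw_class n u" "v \<in> tw_class n v"
    using assms tw_class_self by auto
  ultimately have "(\<Union>a\<in>tw_class n u. \<Union>b\<in>tw_class n v. tw_class n (a @ b)) = tw_class n (u @ v)"
    by blast
  then show ?thesis unfolding twin_group_def tw_class_def by simp
qed

lemma tw_conv_rev_append_self: "w \<in> tw_words n \<Longrightarrow> (rev w @ w, []) \<in> tw_conv n"
proof (induction w)
  case (Cons a w)
  have "(rev w @ [a, a] @ w, rev w @ w) \<in> tw_step n"
    using Cons.prems by (intro tw_step.invol) auto
  then have "(rev (a # w) @ a # w, rev w @ w) \<in> tw_step n \<union> (tw_step n)\<inverse>"
    by simp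
  with Cons show ?case by (meson converse_rtrancl_into_rtrancl tw_words_Cons)
qed simp

lemma tw_class_rev_mult_self:
  "w \<in> tw_words n \<Longrightarrow> tw_class n (rev w) \<otimes>\<^bsub>twin_group n\<^esub> tw_class n w = \<one>\<^bsub>twin_group n\<^esub>"
  by (simp add: tw_class_mult one_twin_group tw_class_eqI tw_conv_rev_append_self)

lemma tw_class_in_carrier: "w \<in> tw_words n \<Longrightarrow> tw_class n w \<in> carrier (twin_group n)"
  by (simp add: carrier_twin_group)

lemma group_twin_group: "group (twin_group n)"
proof (rule groupI)
  fix x assume "x \<in> carrier (twin_group n)"
  then obtain w where w: "w \<in> tw_words n" "x = tw_class n w"
    by (auto simp: carrier_twin_group)
  have "tw_class n (rev w) \<otimes>\<^bsub>twin_group n\<^esub> x = \<one>\<^bsub>twin_group n\<^esub>"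
    using w tw_class_rev_mult_self by simp
  moreover have "tw_class n (rev w) \<in> carrier (twin_group n)"
    using w(1) by (simp add: tw_class_in_carrier)
  ultimately show "\<exists>y\<in>carrier (twin_group n). y \<otimes>\<^bsub>twin_group n\<^esub> x = \<one>\<^bsub>twin_group n\<^esub>"
    by blast
qed (auto simp: carrier_twin_group one_twin_group tw_class_mult)

lemma inv_tw_class: "w \<in> tw_words n \<Longrightarrow> inv\<^bsub>twin_group n\<^esub> (tw_class n w) = tw_class n (rev w)"
  by (metis group.inv_equality group_twin_group tw_class_in_carrier tw_class_rev_mult_self tw_words_rev)

section \<open>Identities certified by a normal form\<close>

definition far :: "nat \<Rightarrow> nat \<Rightarrow> bool" where
  "far i j \<longleftrightarrow> i + 1 < j \<or> j + 1 < i"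

lemma far_shift [simp]: "far (i + k) (j + k) = far i j"
  by (auto simp: far_def)

lemma tw_conv_swap_far:
  "c \<in> {1..<n} \<Longrightarrow> d \<in> {1..<n} \<Longrightarrow> far c d \<Longrightarrow> w \<in> tw_words n \<Longrightarrow> (c # d # w, d # c # w) \<in> tw_conv n"
  using tw_step.comm[of "[]" n w c d] by (auto simp: far_def)

text \<open>A sound but incomplete normal form: a new letter cancels against the first equal letter if all
  letters before that one are far from it, and is otherwise moved right past the smaller far-apart
  letters in front.\<close>

fun nf_cancel :: "nat \<Rightarrow> nat list \<Rightarrow> nat list option" where
  "nf_cancel c [] = None"
| "nf_cancel c (d # w) =
    (if c = d then Some w else if far c d then map_option (Cons d) (nf_cancel c w) else None)"

fun nf_insert :: "nat \<Rightarrow> nat list \<Rightarrow> nat list" where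
  "nf_insert c [] = [c]"
| "nf_insert c (d # w) = (if far c d \<and> d < c then d # nf_insert c w else c # d # w)"

fun tw_nf :: "nat list \<Rightarrow> nat list" where
  "tw_nf [] = []"
| "tw_nf (c # w) = (case nf_cancel c (tw_nf w) of Some v \<Rightarrow> v | None \<Rightarrow> nf_insert c (tw_nf w))"

lemma nf_cancel_sound: "nf_cancel c w = Some v \<Longrightarrow> c # w \<in> tw_words n \<Longrightarrow> (c # w, v) \<in> tw_conv n"
proof (induction w arbitrary: v)
  case (Cons d w)
  show ?case
  proof (cases "c = d")
    case True
    then have "(c # d # w, v) \<in> tw_step n"
      using Cons.prems tw_step.invol[of "[]" n w c] by simp
    then show ?thesis by blast
  next
    case False
    then obtain v' where far: "far c d" and v': "nf_cancel c w = Some v'" "v = d # v'"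
      using Cons.prems by (auto split: if_splits)
    have "(c # d # w, d # c # w) \<in> tw_conv n"
      using tw_conv_swap_far[OF _ _ far] Cons.prems by auto
    moreover have "(d # c # w, d # v') \<in> tw_conv n"
      using Cons.IH[OF v'(1)] Cons.prems by (auto intro: tw_conv_Cons)
    ultimately show ?thesis using v' by (meson rtrancl_trans)
  qed
qed simp

lemma nf_insert_sound: "c # w \<in> tw_words n \<Longrightarrow> (c # w, nf_insert c w) \<in> tw_conv n"
proof (induction w)
  case (Cons d w)
  show ?case
  proof (cases "far c d \<and> d < c")
    case True
    have "(c # d # w, d # c # w) \<in> tw_conv n"
      using tw_conv_swap_far True Cons.prems by auto
    moreover have "(d # c # w, d # nf_insert c w) \<in> tw_conv n"
      using Cons by (auto intro: tw_conv_Cons)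
    ultimately show ?thesis using True by (auto intro: rtrancl_trans)
  next
    case False
    then show ?thesis by auto
  qed
qed simp

lemma tw_nf_sound: "w \<in> tw_words n \<Longrightarrow> (w, tw_nf w) \<in> tw_conv n"
proof (induction w)
  case (Cons c w)
  have "(c # w, c # tw_nf w) \<in> tw_conv n"
    using Cons by (auto intro: tw_conv_Cons)
  moreover have "c # tw_nf w \<in> tw_words n"
    using Cons tw_conv_words by auto
  ultimately show ?case
    using nf_insert_sound nf_cancel_sound
    by (auto split: option.split intro: rtrancl_trans)
qed simp

lemma tw_class_eq_if_nf_eq:
  "tw_nf u = tw_nf v \<Longrightarrow> u \<in> tw_words n \<Longrightarrow> v \<in> tw_words n \<Longrightarrow> tw_class n u = tw_class n v"
  using tw_nf_sound[of u n] tw_nf_sound[of v n] tw_conv_sym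
  by (metis tw_class_eqI)

lemma nf_cancel_shift:
  "nf_cancel (c + k) (map (\<lambda>x. x + k) w) = map_option (map (\<lambda>x. x + k)) (nf_cancel c w)"
  by (induction w) (auto simp: option.map_comp comp_def)

lemma nf_insert_shift: "nf_insert (c + k) (map (\<lambda>x. x + k) w) = map (\<lambda>x. x + k) (nf_insert c w)"
  by (induction w) auto

lemma tw_nf_shift: "tw_nf (map (\<lambda>x. x + k) w) = map (\<lambda>x. x + k) (tw_nf w)"
  by (induction w) (auto simp: nf_cancel_shift nf_insert_shift split: option.split)

lemma tw_nf_eq_shiftI:
  "tw_nf u = tw_nf v \<Longrightarrow> map (\<lambda>x. x + k) u = u' \<Longrightarrow> map (\<lambda>x. x + k) v = v' \<Longrightarrow> tw_nf u' = tw_nf v'"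
  by (auto simp: tw_nf_shift)

definition alpha_word :: "nat \<Rightarrow> nat list" where
  "alpha_word i = [i, i + 1, i, i + 1]"

definition beta_word :: "nat \<Rightarrow> nat list" where
  "beta_word i = [i - 1, i, i + 1, i, i + 1, i - 1]"

lemma alpha_word_in_tw_words [simp]: "alpha_word i \<in> tw_words n \<longleftrightarrow> 1 \<le> i \<and> i + 1 < n"
  by (auto simp: alpha_word_def)

lemma beta_word_in_tw_words [simp]: "2 \<le> i \<Longrightarrow> beta_word i \<in> tw_words n \<longleftrightarrow> i + 1 < n"
  by (auto simp: beta_word_def)

text \<open>Each identity below involves only the letters i, ..., i + 3; it is the translate of an identity
  in the letters 0, ..., 3, which \<open>code_simp\<close> checks by evaluating \<open>tw_nf\<close>.\<close>

lemma tw_nf_conj_alpha_same: "tw_nf ([i] @ alpha_word i @ [i]) = tw_nf (rev (alpha_word i))"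
  by (rule tw_nf_eq_shiftI[where u="[0,0,1,0,1,0]" and v="[1,0,1,0]" and k=i], code_simp)
    (simp_all add: alpha_word_def)

lemma tw_nf_conj_alpha_Suc: "tw_nf ([i + 1] @ alpha_word i @ [i + 1]) = tw_nf (rev (alpha_word i))"
  by (rule tw_nf_eq_shiftI[where u="[1,0,1,0,1,1]" and v="[1,0,1,0]" and k=i], code_simp)
    (simp_all add: alpha_word_def)

lemma tw_nf_conj_alpha_Suc_Suc:
  "tw_nf ([i + 2] @ alpha_word i @ [i + 2])
    = tw_nf (rev (beta_word (i + 1)) @ alpha_word i @ alpha_word (i + 1))"
  by (rule tw_nf_eq_shiftI[where u="[2,0,1,0,1,2]"
        and v="rev [0,1,2,1,2,0] @ [0,1,0,1] @ [1,2,1,2]" and k=i], code_simp)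
    (simp_all add: alpha_word_def beta_word_def)

lemma tw_nf_conj_beta_pred:
  "tw_nf ([p] @ beta_word (p + 2) @ [p]) = tw_nf (alpha_word p @ beta_word (p + 2) @ rev (alpha_word p))"
  by (rule tw_nf_eq_shiftI[where u="[0,1,2,3,2,3,1,0]"
        and v="[0,1,0,1] @ [1,2,3,2,3,1] @ rev [0,1,0,1]" and k=p], code_simp)
    (simp_all add: alpha_word_def beta_word_def)

lemma tw_nf_conj_beta_same:
  "tw_nf ([p] @ beta_word (p + 1) @ [p]) = tw_nf (alpha_word (p + 1))"
  by (rule tw_nf_eq_shiftI[where u="[0,0,1,2,1,2,0,0]" and v="[1,2,1,2]" and k=p], code_simp)
    (simp_all add: alpha_word_def beta_word_def)

lemma tw_nf_conj_beta_Suc: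
  "tw_nf ([p + 1] @ beta_word (p + 1) @ [p + 1])
    = tw_nf (rev (alpha_word p) @ rev (beta_word (p + 1)) @ alpha_word p)"
  by (rule tw_nf_eq_shiftI[where u="[1,0,1,2,1,2,0,1]"
        and v="rev [0,1,0,1] @ rev [0,1,2,1,2,0] @ [0,1,0,1]" and k=p], code_simp)
    (simp_all add: alpha_word_def beta_word_def)

lemma tw_nf_conj_beta_Suc_Suc:
  "tw_nf ([p + 2] @ beta_word (p + 1) @ [p + 2]) = tw_nf (rev (beta_word (p + 1)))"
  by (rule tw_nf_eq_shiftI[where u="[2,0,1,2,1,2,0,2]" and v="rev [0,1,2,1,2,0]" and k=p], code_simp)
    (simp_all add: beta_word_def)

lemma tw_nf_conj_beta_Suc_Suc_Suc:
  "tw_nf ([p + 3] @ beta_word (p + 1) @ [p + 3])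
    = tw_nf (alpha_word p @ rev (beta_word (p + 2)) @ rev (alpha_word p) @ beta_word (p + 1)
             @ alpha_word (p + 2))"
  by (rule tw_nf_eq_shiftI[where u="[3,0,1,2,1,2,0,3]"
        and v="[0,1,0,1] @ rev [1,2,3,2,3,1] @ rev [0,1,0,1] @ [0,1,2,1,2,0] @ [2,3,2,3]" and k=p],
      code_simp)
    (simp_all add: alpha_word_def beta_word_def)

lemma tw_nf_beta_commutator:
  "tw_nf (beta_word (p + 1)) = tw_nf ([p, p + 1, p] @ [p + 2] @ rev [p, p + 1, p] @ [p + 2])"
  by (rule tw_nf_eq_shiftI[where u="[0,1,2,1,2,0]" and v="[0,1,0] @ [2] @ rev [0,1,0] @ [2]" and k=p],
      code_simp)
    (simp_all add: beta_word_def)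

section \<open>Generators of the commutator subgroup\<close>

abbreviation tau :: "nat \<Rightarrow> nat \<Rightarrow> nat list set" where
  "tau n j \<equiv> tw_class n [j]"

lemma tw_class_Cons: "j # w \<in> tw_words n \<Longrightarrow> tw_class n (j # w) = tau n j \<otimes>\<^bsub>twin_group n\<^esub> tw_class n w"
  using tw_class_mult[of "[j]" n w] by simp

lemma inv_tau: "j \<in> {1..<n} \<Longrightarrow> inv\<^bsub>twin_group n\<^esub> (tau n j) = tau n j"
  using inv_tw_class[of "[j]" n] by simp

lemma taus_subset_carrier: "tau n ` {1..<n} \<subseteq> carrier (twin_group n)"
  by (auto simp: carrier_twin_group)

lemma generate_taus: "generate (twin_group n) (tau n ` {1..<n}) = carrier (twin_group n)"
proof
  interpret group "twin_group n" by (rule group_twin_group)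
  show "generate (twin_group n) (tau n ` {1..<n}) \<subseteq> carrier (twin_group n)"
    by (rule generate_incl[OF taus_subset_carrier])
  have "tw_class n w \<in> generate (twin_group n) (tau n ` {1..<n})" if "w \<in> tw_words n" for w
    using that
  proof (induction w)
    case Nil
    show ?case unfolding one_twin_group[symmetric] by (rule generate.one)
  next
    case (Cons j w)
    have "tau n j \<in> generate (twin_group n) (tau n ` {1..<n})"
      using Cons.prems by (intro generate.incl imageI) simp
    moreover have "tw_class n w \<in> generate (twin_group n) (tau n ` {1..<n})"
      using Cons by simp
    ultimately show ?case
      unfolding tw_class_Cons[OF Cons.prems] by (rule generate.eng)
  qed
  then show "carrier (twin_group n) \<subseteq> generate (twin_group n) (tau n ` {1..<n})"
    by (auto simp: carrier_twin_group)
qed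

lemma tau_conj:
  "j \<in> {1..<n} \<Longrightarrow> w \<in> tw_words n \<Longrightarrow>
    tau n j \<otimes>\<^bsub>twin_group n\<^esub> tw_class n w \<otimes>\<^bsub>twin_group n\<^esub> inv\<^bsub>twin_group n\<^esub> (tau n j)
      = tw_class n ([j] @ w @ [j])"
  by (simp add: inv_tau tw_class_mult)

lemma tau_commute:
  assumes "i \<in> {1..<n}" "j \<in> {1..<n}" "i = j \<or> far i j"
  shows "tau n i \<otimes>\<^bsub>twin_group n\<^esub> tau n j = tau n j \<otimes>\<^bsub>twin_group n\<^esub> tau n i"
proof -
  have "tw_class n [i, j] = tw_class n [j, i]"
    using assms tw_conv_swap_far[of i n j "[]"] tw_class_eqI[of "[i, j]" "[j, i]" n] by auto
  then show ?thesis using assms by (simp add: tw_class_mult)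
qed

lemma tw_conv_move_far_letter:
  "j \<in> {1..<n} \<Longrightarrow> w \<in> tw_words n \<Longrightarrow> \<forall>x\<in>set w. far j x \<Longrightarrow> (j # w, w @ [j]) \<in> tw_conv n"
proof (induction w)
  case (Cons d w)
  have "(j # d # w, d # j # w) \<in> tw_conv n"
    using tw_conv_swap_far Cons.prems by auto
  moreover have "(d # j # w, d # (w @ [j])) \<in> tw_conv n"
    using Cons by (auto intro: tw_conv_Cons)
  ultimately show ?case by (auto intro: rtrancl_trans)
qed simp

lemma tw_class_conj_far:
  assumes "j \<in> {1..<n}" "w \<in> tw_words n" "\<forall>x\<in>set w. far j x"
  shows "tw_class n ([j] @ w @ [j]) = tw_class n w"
proof -
  have "([] @ (j # w) @ [j], [] @ (w @ [j]) @ [j]) \<in> tw_conv n"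
    using tw_conv_context[OF tw_conv_move_far_letter[OF assms], of "[]" "[j]"] assms by simp
  moreover have "(w @ [j, j] @ [], w @ []) \<in> tw_step n"
    using assms by (intro tw_step.invol) auto
  ultimately have "([j] @ w @ [j], w) \<in> tw_conv n"
    by (auto intro: rtrancl_into_rtrancl)
  then show ?thesis using assms by (simp add: tw_class_eqI)
qed

lemma tw_class_append_in_subgroup:
  "subgroup H (twin_group n) \<Longrightarrow> u \<in> tw_words n \<Longrightarrow> v \<in> tw_words n \<Longrightarrow>
    tw_class n u \<in> H \<Longrightarrow> tw_class n v \<in> H \<Longrightarrow> tw_class n (u @ v) \<in> H"
  by (metis subgroup.m_closed tw_class_mult)

lemma tw_class_rev_in_subgroup:
  "subgroup H (twin_group n) \<Longrightarrow> u \<in> tw_words n \<Longrightarrow> tw_class n u \<in> H \<Longrightarrow> tw_class n (rev u) \<in> H"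
  by (metis subgroup.m_inv_closed inv_tw_class)

definition tw_commutator_gens :: "nat \<Rightarrow> nat list set set" where
  "tw_commutator_gens n =
     (\<lambda>i. tw_class n (alpha_word i)) ` {1..<n - 1} \<union> (\<lambda>i. tw_class n (beta_word i)) ` {2..<n - 1}"

lemma tw_commutator_gens_subset_carrier: "tw_commutator_gens n \<subseteq> carrier (twin_group n)"
  by (auto simp: tw_commutator_gens_def carrier_twin_group)

lemma subgroup_generate_tw_commutator_gens:
  "subgroup (generate (twin_group n) (tw_commutator_gens n)) (twin_group n)"
  by (rule group.generate_is_subgroup[OF group_twin_group tw_commutator_gens_subset_carrier])

lemma alpha_in_generate_tw_commutator_gens:
  "1 \<le> i \<Longrightarrow> i + 1 < n \<Longrightarrow> tw_class n (alpha_word i) \<in> generate (twin_group n) (tw_commutator_gens n)"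
  unfolding tw_commutator_gens_def by (rule generate.incl) auto

lemma beta_in_generate_tw_commutator_gens:
  "2 \<le> i \<Longrightarrow> i + 1 < n \<Longrightarrow> tw_class n (beta_word i) \<in> generate (twin_group n) (tw_commutator_gens n)"
  unfolding tw_commutator_gens_def by (rule generate.incl) auto

lemma tw_class_conj_alpha_in_generate:
  assumes i: "1 \<le> i" "i + 1 < n" and j: "j \<in> {1..<n}"
  shows "tw_class n ([j] @ alpha_word i @ [j]) \<in> generate (twin_group n) (tw_commutator_gens n)"
proof -
  note N = subgroup_generate_tw_commutator_gens[of n]
  note alpha = alpha_in_generate_tw_commutator_gens[of _ n]
  note beta = beta_in_generate_tw_commutator_gens[of _ n]
  note append = tw_class_append_in_subgroup[OF N] and rev = tw_class_rev_in_subgroup[OF N]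
  have "j = i \<or> j = i + 1 \<or> j = i + 2 \<or> j + 1 = i \<or> j + 2 \<le> i \<or> i + 3 \<le> j"
    by arith
  then consider "j = i" | "j = i + 1" | "j = i + 2" | "j + 1 = i" | "\<forall>x\<in>set (alpha_word i). far j x"
    unfolding alpha_word_def far_def by auto
  then show ?thesis
  proof cases
    case 1
    then have "tw_class n ([j] @ alpha_word i @ [j]) = tw_class n (rev (alpha_word i))"
      using tw_class_eq_if_nf_eq[OF tw_nf_conj_alpha_same] i j by simp
    then show ?thesis using i by (simp add: rev alpha)
  next
    case 2
    then have "tw_class n ([j] @ alpha_word i @ [j]) = tw_class n (rev (alpha_word i))"
      using tw_class_eq_if_nf_eq[OF tw_nf_conj_alpha_Suc] i j by simp
    then show ?thesis using i by (simp add: rev alpha)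
  next
    case 3
    then have "tw_class n ([j] @ alpha_word i @ [j])
        = tw_class n (rev (beta_word (i + 1)) @ alpha_word i @ alpha_word (i + 1))"
      using tw_class_eq_if_nf_eq[OF tw_nf_conj_alpha_Suc_Suc] i j by simp
    then show ?thesis using i j 3 by (simp add: append rev alpha beta)
  next
    case 4
    then have "[j] @ alpha_word i @ [j] = beta_word i"
      by (auto simp: alpha_word_def beta_word_def)
    then show ?thesis using i j 4 by (simp add: beta)
  next
    case 5
    then show ?thesis using tw_class_conj_far[of j n "alpha_word i"] i j by (simp add: alpha)
  qed
qed

lemma tw_class_conj_beta_in_generate:
  assumes i: "2 \<le> i" "i + 1 < n" and j: "j \<in> {1..<n}"
  shows "tw_class n ([j] @ beta_word i @ [j]) \<in> generate (twin_group n) (tw_commutator_gens n)"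
proof -
  note N = subgroup_generate_tw_commutator_gens[of n]
  note alpha = alpha_in_generate_tw_commutator_gens[of _ n]
  note beta = beta_in_generate_tw_commutator_gens[of _ n]
  note append = tw_class_append_in_subgroup[OF N] and rev = tw_class_rev_in_subgroup[OF N]
  obtain p where p: "i = p + 1" "1 \<le> p"
    using i by (intro that[of "i - 1"]) auto
  have "j + 1 = p \<or> j = p \<or> j = p + 1 \<or> j = p + 2 \<or> j = p + 3 \<or> j + 2 \<le> p \<or> p + 4 \<le> j"
    by arith
  then consider "j + 1 = p" | "j = p" | "j = p + 1" | "j = p + 2" | "j = p + 3"
    | "\<forall>x\<in>set (beta_word i). far j x"
    unfolding p(1) beta_word_def far_def by auto
  then show ?thesis
  proof cases
    case 1
    then have "tw_class n ([j] @ beta_word i @ [j])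
        = tw_class n (alpha_word j @ beta_word i @ rev (alpha_word j))"
      using tw_class_eq_if_nf_eq[OF tw_nf_conj_beta_pred[of j]] i j p by simp
    then show ?thesis using i j p 1 by (simp add: append rev alpha beta)
  next
    case 2
    then have "tw_class n ([j] @ beta_word i @ [j]) = tw_class n (alpha_word i)"
      using tw_class_eq_if_nf_eq[OF tw_nf_conj_beta_same[of p]] i j p by simp
    then show ?thesis using i by (simp add: alpha)
  next
    case 3
    then have "tw_class n ([j] @ beta_word i @ [j])
        = tw_class n (rev (alpha_word p) @ rev (beta_word i) @ alpha_word p)"
      using tw_class_eq_if_nf_eq[OF tw_nf_conj_beta_Suc[of p]] i j p by simp
    then show ?thesis using i j p by (simp add: append rev alpha beta)
  next
    case 4
    then have "tw_class n ([j] @ beta_word i @ [j]) = tw_class n (rev (beta_word i))"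
      using tw_class_eq_if_nf_eq[OF tw_nf_conj_beta_Suc_Suc[of p]] i j p by simp
    then show ?thesis using i by (simp add: rev beta)
  next
    case 5
    then have "tw_class n ([j] @ beta_word i @ [j])
        = tw_class n (alpha_word p @ rev (beta_word (p + 2)) @ rev (alpha_word p) @ beta_word i
            @ alpha_word (p + 2))"
      using tw_class_eq_if_nf_eq[OF tw_nf_conj_beta_Suc_Suc_Suc[of p]] i j p by simp
    then show ?thesis using i j p 5 by (simp add: append rev alpha beta)
  next
    case 6
    then show ?thesis using tw_class_conj_far[of j n "beta_word i"] i j by (simp add: beta)
  qed
qed

lemma normal_generate_tw_commutator_gens: "generate (twin_group n) (tw_commutator_gens n) \<lhd> twin_group n"
proof (rule group.normal_generate_if_conj_closed[OF group_twin_group generate_taus taus_subset_carrier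
      _ tw_commutator_gens_subset_carrier])
  show "inv\<^bsub>twin_group n\<^esub> t \<in> tau n ` {1..<n}" if "t \<in> tau n ` {1..<n}" for t
    using that inv_tau by auto
  show "t \<otimes>\<^bsub>twin_group n\<^esub> s \<otimes>\<^bsub>twin_group n\<^esub> inv\<^bsub>twin_group n\<^esub> t
      \<in> generate (twin_group n) (tw_commutator_gens n)"
    if t: "t \<in> tau n ` {1..<n}" and s: "s \<in> tw_commutator_gens n" for t s
  proof -
    obtain j where j: "j \<in> {1..<n}" "t = tau n j"
      using t by blast
    from s consider i where "1 \<le> i" "i + 1 < n" "s = tw_class n (alpha_word i)"
      | i where "2 \<le> i" "i + 1 < n" "s = tw_class n (beta_word i)"
      unfolding tw_commutator_gens_def by fastforce
    then show ?thesis
    proof cases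
      case 1
      then show ?thesis using j tau_conj tw_class_conj_alpha_in_generate by simp
    next
      case 2
      then show ?thesis using j tau_conj tw_class_conj_beta_in_generate by simp
    qed
  qed
qed

lemma tau_commutator_in_generate_tw_commutator_gens:
  assumes ij: "i \<in> {1..<n}" "j \<in> {1..<n}"
  shows "tau n i \<otimes>\<^bsub>twin_group n\<^esub> tau n j \<otimes>\<^bsub>twin_group n\<^esub>
      inv\<^bsub>twin_group n\<^esub> (tau n i) \<otimes>\<^bsub>twin_group n\<^esub> inv\<^bsub>twin_group n\<^esub> (tau n j)
    \<in> generate (twin_group n) (tw_commutator_gens n)"
    (is "?c \<in> _")
proof -
  note N = subgroup_generate_tw_commutator_gens[of n]
  have c: "?c = tw_class n [i, j, i, j]"
    using ij by (simp add: inv_tau tw_class_mult)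
  have "j = i + 1 \<or> i = j + 1 \<or> i = j \<or> far i j"
    unfolding far_def by arith
  then consider "j = i + 1" | "i = j + 1" | "i = j \<or> far i j"
    by blast
  then show ?thesis
  proof cases
    case 1
    then show ?thesis
      unfolding c using ij alpha_in_generate_tw_commutator_gens[of i n] by (simp add: alpha_word_def)
  next
    case 2
    then show ?thesis
      unfolding c using ij tw_class_rev_in_subgroup[OF N _ alpha_in_generate_tw_commutator_gens[of j n]]
      by (simp add: alpha_word_def)
  next
    case 3
    have "tau n i \<in> carrier (twin_group n)" "tau n j \<in> carrier (twin_group n)"
      using ij by (simp_all add: tw_class_in_carrier)
    then have "?c = \<one>\<^bsub>twin_group n\<^esub>"
      using ij 3 tau_commute[of i n j]
      by (intro group.commutator_eq_one_if_commute[OF group_twin_group]) auto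
    then show ?thesis using subgroup.one_closed[OF N] by simp
  qed
qed

lemma alpha_in_derived:
  assumes "1 \<le> i" "i + 1 < n"
  shows "tw_class n (alpha_word i) \<in> derived (twin_group n) (carrier (twin_group n))"
proof -
  have "tw_class n (alpha_word i) = tau n i \<otimes>\<^bsub>twin_group n\<^esub> tau n (i + 1) \<otimes>\<^bsub>twin_group n\<^esub>
      inv\<^bsub>twin_group n\<^esub> (tau n i) \<otimes>\<^bsub>twin_group n\<^esub> inv\<^bsub>twin_group n\<^esub> (tau n (i + 1))"
    using assms by (simp add: inv_tau tw_class_mult alpha_word_def)
  then show ?thesis
    using group.commutator_in_derived[OF group_twin_group] assms by (simp add: tw_class_in_carrier)
qed

lemma beta_in_derived:
  assumes "2 \<le> i" "i + 1 < n"
  shows "tw_class n (beta_word i) \<in> derived (twin_group n) (carrier (twin_group n))"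
proof -
  obtain p where p: "i = p + 1" "1 \<le> p"
    using assms by (intro that[of "i - 1"]) auto
  have "tw_class n (beta_word i) = tw_class n ([p, p + 1, p] @ [p + 2] @ rev [p, p + 1, p] @ [p + 2])"
    using tw_class_eq_if_nf_eq[OF tw_nf_beta_commutator[of p]] assms p by simp
  also have "\<dots> = tw_class n [p, p + 1, p] \<otimes>\<^bsub>twin_group n\<^esub> tau n (p + 2) \<otimes>\<^bsub>twin_group n\<^esub>
      inv\<^bsub>twin_group n\<^esub> (tw_class n [p, p + 1, p]) \<otimes>\<^bsub>twin_group n\<^esub> inv\<^bsub>twin_group n\<^esub> (tau n (p + 2))"
    using assms p by (simp add: inv_tw_class tw_class_mult)
  finally show ?thesis
    using group.commutator_in_derived[OF group_twin_group] assms p by (simp add: tw_class_in_carrier)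
qed

lemma generate_tw_commutator_gens:
  "generate (twin_group n) (tw_commutator_gens n) = derived (twin_group n) (carrier (twin_group n))"
proof
  interpret group "twin_group n" by (rule group_twin_group)
  show "derived (twin_group n) (carrier (twin_group n)) \<subseteq> generate (twin_group n) (tw_commutator_gens n)"
    using tau_commutator_in_generate_tw_commutator_gens
    by (intro derived_subset_if_generator_commutators[OF generate_taus taus_subset_carrier
          normal_generate_tw_commutator_gens]) blast
  have "tw_commutator_gens n \<subseteq> derived (twin_group n) (carrier (twin_group n))"
    unfolding tw_commutator_gens_def using alpha_in_derived beta_in_derived by auto
  then show "generate (twin_group n) (tw_commutator_gens n) \<subseteq> derived (twin_group n) (carrier (twin_group n))"
    by (rule generate_subgroup_incl[OF _ derived_is_subgroup]) simp
qed

section \<open>Parity-weighted sums and the lower bound\<close>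

definition letter_parity :: "nat list \<Rightarrow> nat \<Rightarrow> bool" where
  "letter_parity w p \<longleftrightarrow> odd (count_list w p)"

lemma letter_parity_Nil [simp]: "letter_parity [] = (\<lambda>p. False)"
  by (auto simp: letter_parity_def)

lemma letter_parity_append: "letter_parity (u @ v) p \<longleftrightarrow> letter_parity u p \<noteq> letter_parity v p"
  by (auto simp: letter_parity_def)

lemma letter_parity_rev [simp]: "letter_parity (rev u) = letter_parity u"
  by (auto simp: letter_parity_def)

lemma letter_parity_singleton: "letter_parity [i] = (\<lambda>p. False)(i := True)"
  by (rule ext) (simp add: letter_parity_def)

type_synonym weight = "(nat \<Rightarrow> bool) \<Rightarrow> nat \<Rightarrow> bool"

text \<open>\<open>weight_sum c w\<close> is the sum modulo 2, over the positions k of w, of c applied to the parity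
  vector of the first k letters and to the k-th letter; the recursion on the reversed word adds
  the last letter first.\<close>

primrec weight_sum_rev :: "weight \<Rightarrow> nat list \<Rightarrow> bool" where
  "weight_sum_rev c [] = False"
| "weight_sum_rev c (l # r) = (weight_sum_rev c r \<noteq> c (letter_parity r) l)"

definition weight_sum :: "weight \<Rightarrow> nat list \<Rightarrow> bool" where
  "weight_sum c w = weight_sum_rev c (rev w)"

lemma weight_sum_Nil [simp]: "weight_sum c [] = False"
  by (simp add: weight_sum_def)

lemma weight_sum_snoc: "weight_sum c (w @ [l]) \<longleftrightarrow> weight_sum c w \<noteq> c (letter_parity w) l"
  by (simp add: weight_sum_def)

definition shift_weight :: "weight \<Rightarrow> nat list \<Rightarrow> weight" where
  "shift_weight c u = (\<lambda>s l. c (\<lambda>p. s p \<noteq> letter_parity u p) l)"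

lemma weight_sum_append: "weight_sum c (u @ v) \<longleftrightarrow> weight_sum c u \<noteq> weight_sum (shift_weight c u) v"
proof (induction v rule: rev_induct)
  case (snoc l v)
  have "letter_parity (u @ v) = (\<lambda>p. letter_parity v p \<noteq> letter_parity u p)"
    by (auto simp: letter_parity_append)
  then show ?case
    using snoc weight_sum_snoc[of c "u @ v" l] weight_sum_snoc[of "shift_weight c u" v l]
    by (auto simp: shift_weight_def)
qed simp

lemma shift_weight_even: "(\<forall>p. \<not> letter_parity u p) \<Longrightarrow> shift_weight c u = c"
  by (auto simp: shift_weight_def)

text \<open>The two clauses make \<open>weight_sum\<close> invariant under the relations tau_i tau_i = 1 and
  tau_i tau_j = tau_j tau_i for far-apart i, j.\<close>

definition admissible_weight :: "weight \<Rightarrow> bool" where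
  "admissible_weight c \<longleftrightarrow>
     (\<forall>s i. c (s(i := \<not> s i)) i = c s i) \<and>
     (\<forall>s i j. far i j \<longrightarrow> (c s i \<noteq> c (s(i := \<not> s i)) j) = (c s j \<noteq> c (s(j := \<not> s j)) i))"

lemma admissible_shift_weight: "admissible_weight c \<Longrightarrow> admissible_weight (shift_weight c u)"
proof -
  have flip: "(\<lambda>p. (s(i := \<not> s i)) p \<noteq> q p) = (\<lambda>p. s p \<noteq> q p)(i := \<not> (s i \<noteq> q i))"
    for s q :: "nat \<Rightarrow> bool" and i
    by (rule ext) auto
  show "admissible_weight c \<Longrightarrow> admissible_weight (shift_weight c u)"
    unfolding admissible_weight_def shift_weight_def flip by blast
qed

lemma weight_sum_pair:
  "weight_sum c [i, j] \<longleftrightarrow> c (\<lambda>p. False) i \<noteq> c ((\<lambda>p. False)(i := True)) j"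
  using weight_sum_snoc[of c "[i]" j] weight_sum_snoc[of c "[]" i] by (simp add: letter_parity_singleton)

lemma weight_sum_tw_step:
  assumes "(u, v) \<in> tw_step n" "admissible_weight c"
  shows "weight_sum c u = weight_sum c v"
  using assms
proof (induction rule: tw_step.induct)
  case (invol xs ys i)
  let ?c = "shift_weight c xs"
  have "?c ((\<lambda>p. False)(i := \<not> False)) i = ?c (\<lambda>p. False) i"
    using admissible_shift_weight[OF invol.prems] unfolding admissible_weight_def by blast
  then have "\<not> weight_sum ?c [i, i]"
    by (simp add: weight_sum_pair)
  moreover have "shift_weight ?c [i, i] = ?c"
    by (rule shift_weight_even) (simp add: letter_parity_def)
  ultimately show ?case
    using weight_sum_append[of c xs "[i, i] @ ys"] weight_sum_append[of ?c "[i, i]" ys]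
      weight_sum_append[of c xs ys]
    by simp
next
  case (comm xs ys i j)
  let ?c = "shift_weight c xs"
  have "far i j" using comm.hyps(5) by (simp add: far_def)
  then have "(?c (\<lambda>p. False) i \<noteq> ?c ((\<lambda>p. False)(i := \<not> False)) j)
      = (?c (\<lambda>p. False) j \<noteq> ?c ((\<lambda>p. False)(j := \<not> False)) i)"
    using admissible_shift_weight[OF comm.prems] unfolding admissible_weight_def by blast
  then have "weight_sum ?c [i, j] = weight_sum ?c [j, i]"
    by (simp add: weight_sum_pair)
  moreover have "letter_parity [i, j] = letter_parity [j, i]"
    by (rule ext) (simp add: letter_parity_def)
  then have "shift_weight ?c [i, j] = shift_weight ?c [j, i]"
    by (simp only: shift_weight_def)
  ultimately show ?case
    using weight_sum_append[of c xs "[i, j] @ ys"] weight_sum_append[of ?c "[i, j]" ys]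
      weight_sum_append[of c xs "[j, i] @ ys"] weight_sum_append[of ?c "[j, i]" ys]
    by simp
qed

lemma weight_sum_tw_conv: "(u, v) \<in> tw_conv n \<Longrightarrow> admissible_weight c \<Longrightarrow> weight_sum c u = weight_sum c v"
  by (induction rule: rtrancl_induct) (auto dest: weight_sum_tw_step)

definition class_weight :: "weight \<Rightarrow> nat list set \<Rightarrow> bool" where
  "class_weight c x = weight_sum c (SOME w. w \<in> x)"

lemma class_weight_tw_class:
  assumes "admissible_weight c" "w \<in> tw_words n"
  shows "class_weight c (tw_class n w) = weight_sum c w"
proof -
  let ?v = "SOME v. v \<in> tw_class n w"
  have "?v \<in> tw_class n w"
    using tw_class_self[OF assms(2)] by (rule someI)
  then have "(w, ?v) \<in> tw_conv n"
    unfolding mem_tw_class_iff tw_eq_iff by blast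
  then show ?thesis
    unfolding class_weight_def using weight_sum_tw_conv[OF _ assms(1)] by blast
qed

text \<open>The second tau_i of alpha_i is preceded by an odd number of tau_(i+1) and an even number of
  tau_(i-1); in beta_i both numbers are odd. The weights below count exactly such occurrences, which
  makes them dual to the alpha_i and beta_i.\<close>

definition alpha_weight :: "nat \<Rightarrow> weight" where
  "alpha_weight i = (\<lambda>s l. l = i \<and> s (i + 1) \<and> \<not> (2 \<le> i \<and> s (i - 1)))"

definition beta_weight :: "nat \<Rightarrow> weight" where
  "beta_weight i = (\<lambda>s l. l = i \<and> s (i - 1) \<and> s (i + 1))"

definition basis_weight :: "nat \<times> bool \<Rightarrow> weight" where
  "basis_weight j = (if snd j then beta_weight (fst j) else alpha_weight (fst j))"

text \<open>(i, False) indexes alpha_i and (i, True) indexes beta_i.\<close>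

definition tw_commutator_index :: "nat \<Rightarrow> (nat \<times> bool) set" where
  "tw_commutator_index n = {1..<n - 1} \<times> {False} \<union> {2..<n - 1} \<times> {True}"

lemma admissible_basis_weight: "1 \<le> fst j \<Longrightarrow> admissible_weight (basis_weight j)"
  by (auto simp: admissible_weight_def basis_weight_def alpha_weight_def beta_weight_def far_def)

lemma weight_sum_basis_weight_alpha:
  "1 \<le> i \<Longrightarrow> weight_sum (basis_weight (k, b)) (alpha_word i) \<longleftrightarrow> k = i \<and> \<not> b"
  by (auto simp: basis_weight_def alpha_weight_def beta_weight_def weight_sum_def alpha_word_def
      letter_parity_def)

lemma weight_sum_basis_weight_beta:
  "2 \<le> i \<Longrightarrow> weight_sum (basis_weight (k, b)) (beta_word i) \<longleftrightarrow> k = i \<and> b"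
  by (auto simp: basis_weight_def alpha_weight_def beta_weight_def weight_sum_def beta_word_def
      letter_parity_def)

definition even_classes :: "nat \<Rightarrow> nat list set set" where
  "even_classes n = {tw_class n w | w. w \<in> tw_words n \<and> (\<forall>p. \<not> letter_parity w p)}"

lemma subgroup_even_classes: "subgroup (even_classes n) (twin_group n)"
proof (rule group.subgroupI[OF group_twin_group])
  show "even_classes n \<subseteq> carrier (twin_group n)"
    by (auto simp: even_classes_def tw_class_in_carrier)
  have "tw_class n [] \<in> even_classes n"
    by (auto simp: even_classes_def)
  then show "even_classes n \<noteq> {}"
    by blast
  show "inv\<^bsub>twin_group n\<^esub> x \<in> even_classes n" if "x \<in> even_classes n" for x
    using that by (auto simp: even_classes_def inv_tw_class)
  show "x \<otimes>\<^bsub>twin_group n\<^esub> y \<in> even_classes n" if xy: "x \<in> even_classes n" "y \<in> even_classes n" for x y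
  proof -
    obtain u v where "u \<in> tw_words n" "v \<in> tw_words n" "x = tw_class n u" "y = tw_class n v"
      "\<forall>p. \<not> letter_parity u p" "\<forall>p. \<not> letter_parity v p"
      using xy by (auto simp: even_classes_def)
    then show ?thesis
      unfolding even_classes_def
      by (intro CollectI exI[of _ "u @ v"]) (simp add: tw_class_mult letter_parity_append)
  qed
qed

lemma derived_subset_even_classes:
  "derived (twin_group n) (carrier (twin_group n)) \<subseteq> even_classes n"
  unfolding derived_def
proof (rule group.generate_subgroup_incl[OF group_twin_group _ subgroup_even_classes], safe)
  fix x y assume "x \<in> carrier (twin_group n)" "y \<in> carrier (twin_group n)"
  then obtain u v where uv: "u \<in> tw_words n" "v \<in> tw_words n" "x = tw_class n u" "y = tw_class n v"
    by (auto simp: carrier_twin_group)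
  then have "x \<otimes>\<^bsub>twin_group n\<^esub> y \<otimes>\<^bsub>twin_group n\<^esub> inv\<^bsub>twin_group n\<^esub> x
      \<otimes>\<^bsub>twin_group n\<^esub> inv\<^bsub>twin_group n\<^esub> y = tw_class n (u @ v @ rev u @ rev v)"
    by (simp add: tw_class_mult inv_tw_class)
  then show "x \<otimes>\<^bsub>twin_group n\<^esub> y \<otimes>\<^bsub>twin_group n\<^esub> inv\<^bsub>twin_group n\<^esub> x
      \<otimes>\<^bsub>twin_group n\<^esub> inv\<^bsub>twin_group n\<^esub> y \<in> even_classes n"
    unfolding even_classes_def using uv by (auto simp: letter_parity_append)
qed

definition tw_commutator_coords :: "nat \<Rightarrow> nat list set \<Rightarrow> (nat \<times> bool) set" where
  "tw_commutator_coords n x = {j \<in> tw_commutator_index n. class_weight (basis_weight j) x}"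

lemma tw_commutator_coords_tw_class:
  "w \<in> tw_words n \<Longrightarrow> tw_commutator_coords n (tw_class n w) = {j \<in> tw_commutator_index n. weight_sum (basis_weight j) w}"
  unfolding tw_commutator_coords_def
  by (auto simp: class_weight_tw_class admissible_basis_weight tw_commutator_index_def)

lemma tw_commutator_coords_mult:
  assumes "x \<in> even_classes n" "y \<in> carrier (twin_group n)"
  shows "tw_commutator_coords n (x \<otimes>\<^bsub>twin_group n\<^esub> y) = symdiff (tw_commutator_coords n x) (tw_commutator_coords n y)"
proof -
  obtain u v where uv: "u \<in> tw_words n" "v \<in> tw_words n" "x = tw_class n u" "y = tw_class n v"
    and even: "\<forall>p. \<not> letter_parity u p"
    using assms by (auto simp: even_classes_def carrier_twin_group)
  have "weight_sum c (u @ v) \<longleftrightarrow> weight_sum c u \<noteq> weight_sum c v" for c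
    using weight_sum_append[of c u v] shift_weight_even[OF even] by simp
  then show ?thesis
    using uv by (auto simp: tw_class_mult tw_commutator_coords_tw_class symdiff_def)
qed

lemma tw_commutator_coords_alpha:
  "1 \<le> i \<Longrightarrow> i + 1 < n \<Longrightarrow> tw_commutator_coords n (tw_class n (alpha_word i)) = {(i, False)}"
  by (auto simp: tw_commutator_coords_tw_class weight_sum_basis_weight_alpha tw_commutator_index_def)

lemma tw_commutator_coords_beta:
  "2 \<le> i \<Longrightarrow> i + 1 < n \<Longrightarrow> tw_commutator_coords n (tw_class n (beta_word i)) = {(i, True)}"
  by (auto simp: tw_commutator_coords_tw_class weight_sum_basis_weight_beta tw_commutator_index_def)

lemma card_tw_commutator_index_le_card_generators:
  assumes "finite S" "generate (twin_group n) S = derived (twin_group n) (carrier (twin_group n))"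
  shows "card (tw_commutator_index n) \<le> card S"
proof (rule group.card_le_card_generators_if_symdiff_hom[OF group_twin_group _ assms(2,1), where f = "tw_commutator_coords n"])
  show D: "subgroup (derived (twin_group n) (carrier (twin_group n))) (twin_group n)"
    by (rule group.derived_is_subgroup[OF group_twin_group]) simp
  show "tw_commutator_coords n (x \<otimes>\<^bsub>twin_group n\<^esub> y) = symdiff (tw_commutator_coords n x) (tw_commutator_coords n y)"
    if xy: "x \<in> derived (twin_group n) (carrier (twin_group n))"
      "y \<in> derived (twin_group n) (carrier (twin_group n))" for x y
  proof (rule tw_commutator_coords_mult)
    show "x \<in> even_classes n"
      using xy(1) derived_subset_even_classes by blast
    show "y \<in> carrier (twin_group n)"
      using subgroup.mem_carrier[OF D xy(2)] .
  qed
  show "\<exists>g\<in>derived (twin_group n) (carrier (twin_group n)). tw_commutator_coords n g = {j}"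
    if j: "j \<in> tw_commutator_index n" for j
  proof (cases "snd j")
    case True
    then have "2 \<le> fst j" "fst j + 1 < n" "j = (fst j, True)"
      using j by (auto simp: tw_commutator_index_def)
    then show ?thesis
      using beta_in_derived tw_commutator_coords_beta by metis
  next
    case False
    then have "1 \<le> fst j" "fst j + 1 < n" "j = (fst j, False)"
      using j by (auto simp: tw_commutator_index_def)
    then show ?thesis
      using alpha_in_derived tw_commutator_coords_alpha by metis
  qed
  show "finite (tw_commutator_index n)"
    by (simp add: tw_commutator_index_def)
qed

lemma card_tw_commutator_gens_le: "card (tw_commutator_gens n) \<le> card (tw_commutator_index n)"
proof -
  have "card (tw_commutator_gens n) \<le> card {1..<n - 1} + card {2..<n - 1}"
    unfolding tw_commutator_gens_def
    by (rule order.trans[OF card_Un_le add_mono[OF card_image_le card_image_le]]) simp_all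
  also have "\<dots> = card (tw_commutator_index n)"
    unfolding tw_commutator_index_def by (subst card_Un_disjoint) (auto simp: card_cartesian_product)
  finally show ?thesis .
qed

lemma card_tw_commutator_index: "card (tw_commutator_index (m + 2)) = 2 * m - 1"
  unfolding tw_commutator_index_def by (subst card_Un_disjoint) (auto simp: card_cartesian_product)

lemma card_tw_commutator_gens: "card (tw_commutator_gens n) = card (tw_commutator_index n)"
proof (rule antisym)
  show "card (tw_commutator_index n) \<le> card (tw_commutator_gens n)"
    by (rule card_tw_commutator_index_le_card_generators[OF _ generate_tw_commutator_gens])
      (simp add: tw_commutator_gens_def)
qed (rule card_tw_commutator_gens_le)

theorem theorem1p2:
  fixes m :: nat
  assumes "m \<ge> 1"
  shows "has_rank (twin_group (m + 2))
           (derived (twin_group (m + 2)) (carrier (twin_group (m + 2))))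
           (2 * m - 1)"
proof -
  let ?D = "derived (twin_group (m + 2)) (carrier (twin_group (m + 2)))"
  let ?S = "tw_commutator_gens (m + 2)"
  have gen: "generate (twin_group (m + 2)) ?S = ?D"
    by (rule generate_tw_commutator_gens)
  have S: "?S \<subseteq> ?D" "finite ?S" "card ?S = 2 * m - 1"
    unfolding gen[symmetric] card_tw_commutator_gens card_tw_commutator_index
    by (auto simp: tw_commutator_gens_def intro: generate.incl)
  have minimal: "2 * m - 1 \<le> card S" if "finite S" "generate (twin_group (m + 2)) S = ?D" for S
    using card_tw_commutator_index_le_card_generators[OF that] unfolding card_tw_commutator_index .
  show ?thesis
    unfolding has_rank_def
  proof (intro conjI allI impI)
    show "\<exists>S. S \<subseteq> ?D \<and> finite S \<and> card S = 2 * m - 1 \<and> generate (twin_group (m + 2)) S = ?D"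
      using S gen by blast
    show "2 * m - 1 \<le> card S" if "S \<subseteq> ?D \<and> finite S \<and> generate (twin_group (m + 2)) S = ?D" for S
      using that minimal by blast
  qed
qed

end
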